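(* Let $N$ be even, $J_1,J_2>0$, and let $\mathcal H_N$ be the plaquette orbital Hamiltonian on the torus $\mathbb T_N$ (see context). (i) If $J_1=J_2>0$, then every ground state of $\mathcal H_N$ can be obtained from a constant configuration $\mathbf S_{\boldsymbol r}\equiv \boldsymbol e$, for some unit vector $\boldsymbol e\in\mathbb R^2$, by successive applications of a subset of the maps $(\boldsymbol\varphi_{\boldsymbol r})$. (ii) If $J_1>J_2>0$, then every ground state arises from the constant configuration $\mathbf S_{\boldsymbol r}\equiv\boldsymbol e_1$ by successive applications of a subset of the maps $(\boldsymbol\varphi_{\boldsymbol r})$; if $J_2>J_1>0$, every ground state arises in this way from $\mathbf S_{\boldsymbol r}\equiv \boldsymbol e_2$.
   Context: Let $N$ be an even positive integer and $\mathbb T_N=(\mathbb Z/N\mathbb Z)^2$ the $N\times N$ torus, with unit vectors $\boldsymbol e_1=(1,0)$, $\boldsymbol e_2=(0,1)$. Nearest-neighbour edges are of two types: the horizontal edge $\langle \boldsymbol r,\boldsymbol r+\boldsymbol e_1\rangle$ is an $x$-edge if $r_1$ is even and a $z$-edge if $r_1$ is odd; the vertical edge $\langle\boldsymbol r,\boldsymbol r+\boldsymbol e_2\rangle$ is an $x$-edge if $r_2$ is even and a $z$-edge if $r_2$ is odd. (So each plaquette whose lower-left corner has both coordinates even consists of four $x$-edges, and each plaquette whose lower-left corner has both coordinates odd consists of four $z$-edges.) A configuration is $\mathbf S=(\mathbf S_{\boldsymbol r})_{\boldsymbol r\in\mathbb T_N}$ with each $\mathbf S_{\boldsymbol r}=(S^x_{\boldsymbol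 r},S^z_{\boldsymbol r})$ a unit vector in $\mathbb R^2$. The Hamiltonian is $\mathcal H_N(\mathbf S)=-J_1\sum_{\langle \boldsymbol r,\boldsymbol r'\rangle\ x\text{-edge}}S^x_{\boldsymbol r}S^x_{\boldsymbol r'}-J_2\sum_{\langle \boldsymbol r,\boldsymbol r'\rangle\ z\text{-edge}}S^z_{\boldsymbol r}S^z_{\boldsymbol r'}$. A ground state is a configuration minimizing $\mathcal H_N$. For $\boldsymbol r$ with both coordinates even, $\boldsymbol\varphi_{\boldsymbol r}$ maps $\mathbf S$ to the configuration obtained by replacing $S^x_{\boldsymbol r'}$ by $-S^x_{\boldsymbol r'}$ at the four sites $\boldsymbol r'\in\{\boldsymbol r,\boldsymbol r+\boldsymbol e_1,\boldsymbol r+\boldsymbol e_2,\boldsymbol r+\boldsymbol e_1+\boldsymbol e_2\}$ (all other components unchanged); for $\boldsymbol r$ with both coordinates odd, $\boldsymbol\varphi_{\boldsymbol r}$ does the same with the $z$-components instead of the $x$-components. *)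

theory Defs
  imports Complex_Main
begin

text \<open>Sites of the torus T_N are pairs (a,b) with a,b < N; coordinates are taken mod N.
A spin is a pair (S^x, S^z) of reals. Configurations are functions on sites; only
their values on the torus matter.\<close>

definition torus :: "nat \<Rightarrow> (nat \<times> nat) set" where
  "torus N = {0..<N} \<times> {0..<N}"

definition shift1 :: "nat \<Rightarrow> nat \<times> nat \<Rightarrow> nat \<times> nat" where
  "shift1 N r = ((fst r + 1) mod N, snd r)"

definition shift2 :: "nat \<Rightarrow> nat \<times> nat \<Rightarrow> nat \<times> nat" where
  "shift2 N r = (fst r, (snd r + 1) mod N)"

definition is_config :: "nat \<Rightarrow> (nat \<times> nat \<Rightarrow> real \<times> real) \<Rightarrow> bool" where
  "is_config N S \<longleftrightarrow> (\<forall>r\<in>torus N. (fst (S r))\<^sup>2 + (snd (S r))\<^sup>2 = 1)"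

text \<open>Horizontal edge <r, r+e1> is an x-edge iff r_1 even, a z-edge iff r_1 odd;
vertical edge <r, r+e2> is an x-edge iff r_2 even, a z-edge iff r_2 odd.\<close>

definition hamiltonian :: "nat \<Rightarrow> real \<Rightarrow> real \<Rightarrow> (nat \<times> nat \<Rightarrow> real \<times> real) \<Rightarrow> real" where
  "hamiltonian N J1 J2 S =
     - J1 * (\<Sum>r\<in>torus N.
          (if even (fst r) then fst (S r) * fst (S (shift1 N r)) else 0)
        + (if even (snd r) then fst (S r) * fst (S (shift2 N r)) else 0))
     - J2 * (\<Sum>r\<in>torus N.
          (if odd (fst r) then snd (S r) * snd (S (shift1 N r)) else 0)
        + (if odd (snd r) then snd (S r) * snd (S (shift2 N r)) else 0))"

definition ground_state :: "nat \<Rightarrow> real \<Rightarrow> real \<Rightarrow> (nat \<times> nat \<Rightarrow> real \<times> real) \<Rightarrow> bool" where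
  "ground_state N J1 J2 S \<longleftrightarrow> is_config N S \<and>
     (\<forall>T. is_config N T \<longrightarrow> hamiltonian N J1 J2 S \<le> hamiltonian N J1 J2 T)"

definition plaq_corner :: "nat \<Rightarrow> nat \<times> nat \<Rightarrow> bool" where
  "plaq_corner N r \<longleftrightarrow> r \<in> torus N \<and>
     ((even (fst r) \<and> even (snd r)) \<or> (odd (fst r) \<and> odd (snd r)))"

definition plaquette :: "nat \<Rightarrow> nat \<times> nat \<Rightarrow> (nat \<times> nat) set" where
  "plaquette N r = {r, shift1 N r, shift2 N r, shift2 N (shift1 N r)}"

definition phi :: "nat \<Rightarrow> nat \<times> nat \<Rightarrow> (nat \<times> nat \<Rightarrow> real \<times> real) \<Rightarrow> (nat \<times> nat \<Rightarrow> real \<times> real)" where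
  "phi N r S = (\<lambda>s. if s \<in> plaquette N r then
       (if even (fst r) then (- fst (S s), snd (S s)) else (fst (S s), - snd (S s)))
     else S s)"

definition obtainable_from :: "nat \<Rightarrow> real \<times> real \<Rightarrow> (nat \<times> nat \<Rightarrow> real \<times> real) \<Rightarrow> bool" where
  "obtainable_from N e S \<longleftrightarrow>
     (\<exists>rs. distinct rs \<and> (\<forall>r\<in>set rs. plaq_corner N r) \<and>
        (\<forall>s\<in>torus N. fold (phi N) rs (\<lambda>_. e) s = S s))"

end

theory Submission
  imports Defs
begin

text \<open>Along a bond, a b = (a^2 + b^2)/2 - (a - b)^2/2, and each site meets exactly one
x-bond and one z-bond in each lattice direction. Hence
H = -J1 \<Sigma> (S^x)^2 - J2 \<Sigma> (S^z)^2 + (J1 D_x + J2 D_z)/2 with nonnegative bond defects D,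
while \<Sigma> ((S^x)^2 + (S^z)^2) = N^2. Comparing with the constant configurations e_1 and e_2,
a ground state has no defects, and for J1 \<noteq> J2 the weaker component vanishes identically.
Without defects S^x is constant on every x-plaquette and S^z on every z-plaquette; since
every site lies in exactly one plaquette of each kind, flipping those plaquettes on which the
relevant component is negative turns the constant configuration (|S^x|, |S^z|) into S.\<close>

section \<open>The torus\<close>

lemma finite_torus: "finite (torus N)"
  by (simp add: torus_def)

lemma card_torus: "card (torus N) = N * N"
  by (simp add: torus_def card_cartesian_product)

lemma shift1_in_torus: "r \<in> torus N \<Longrightarrow> shift1 N r \<in> torus N"
  by (auto simp: torus_def shift1_def)

lemma shift2_in_torus: "r \<in> torus N \<Longrightarrow> shift2 N r \<in> torus N"
  by (auto simp: torus_def shift2_def)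

lemma Suc_mod_inject: "(a::nat) < N \<Longrightarrow> b < N \<Longrightarrow> Suc a mod N = Suc b mod N \<Longrightarrow> a = b"
  by (auto simp: mod_Suc split: if_splits)

lemma bij_betw_shift1: "bij_betw (shift1 N) (torus N) (torus N)"
proof -
  have "inj_on (shift1 N) (torus N)"
    by (auto simp: inj_on_def torus_def shift1_def dest: Suc_mod_inject)
  moreover have "shift1 N ` torus N = torus N"
    using endo_inj_surj[OF finite_torus _ calculation] shift1_in_torus by blast
  ultimately show ?thesis by (simp add: bij_betw_def)
qed

lemma bij_betw_shift2: "bij_betw (shift2 N) (torus N) (torus N)"
proof -
  have "inj_on (shift2 N) (torus N)"
    by (auto simp: inj_on_def torus_def shift2_def dest: Suc_mod_inject)
  moreover have "shift2 N ` torus N = torus N"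
    using endo_inj_surj[OF finite_torus _ calculation] shift2_in_torus by blast
  ultimately show ?thesis by (simp add: bij_betw_def)
qed

lemma even_Suc_mod: "even N \<Longrightarrow> (a::nat) < N \<Longrightarrow> even (Suc a mod N) \<longleftrightarrow> odd a"
  by (auto simp: mod_Suc)

lemma even_fst_shift1: "even N \<Longrightarrow> r \<in> torus N \<Longrightarrow> even (fst (shift1 N r)) \<longleftrightarrow> odd (fst r)"
  by (auto simp: torus_def shift1_def even_Suc_mod)

lemma even_snd_shift2: "even N \<Longrightarrow> r \<in> torus N \<Longrightarrow> even (snd (shift2 N r)) \<longleftrightarrow> odd (snd r)"
  by (auto simp: torus_def shift2_def even_Suc_mod)

lemma torus_shift_invariant_const:
  assumes inv1: "\<forall>r\<in>torus N. g (shift1 N r) = g r"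
    and inv2: "\<forall>r\<in>torus N. g (shift2 N r) = g r"
    and r: "r \<in> torus N"
  shows "g r = g (0, 0)"
proof -
  have column: "g (i, j) = g (i, 0)" if "i < N" "j < N" for i j
    using that(2)
  proof (induction j)
    case (Suc j)
    then have "g (shift2 N (i, j)) = g (i, j)" using inv2 \<open>i < N\<close> by (simp add: torus_def)
    then show ?case using Suc by (simp add: shift2_def)
  qed simp
  have row: "g (i, 0) = g (0, 0)" if "i < N" for i
    using that
  proof (induction i)
    case (Suc i)
    then have "g (shift1 N (i, 0)) = g (i, 0)" using inv1 by (simp add: torus_def)
    then show ?case using Suc by (simp add: shift1_def)
  qed simp
  obtain i j where "r = (i, j)" "i < N" "j < N" using r by (auto simp: torus_def)
  then show ?thesis using column row by metis
qed

text \<open>Q alternates along \<sigma>, so the bonds {r, \<sigma> r} with Q r cover every element of A exactly once.\<close>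

lemma sum_bond_products:
  fixes f :: "'a \<Rightarrow> real"
  assumes bij: "bij_betw \<sigma> A A" and alt: "\<forall>r\<in>A. Q (\<sigma> r) \<longleftrightarrow> \<not> Q r"
  shows "(\<Sum>r\<in>A. if Q r then f r * f (\<sigma> r) else 0)
       = (\<Sum>r\<in>A. (f r)\<^sup>2) / 2 - (\<Sum>r\<in>A. if Q r then (f r - f (\<sigma> r))\<^sup>2 else 0) / 2"
proof -
  define g where "g r = (if Q r then 0 else (f r)\<^sup>2)" for r
  have "(\<Sum>r\<in>A. if Q r then (f (\<sigma> r))\<^sup>2 else 0) = (\<Sum>r\<in>A. g (\<sigma> r))"
    using alt by (intro sum.cong) (auto simp: g_def)
  also have "\<dots> = (\<Sum>r\<in>A. g r)"
    using sum.reindex_bij_betw[OF bij] by simp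
  finally have partner: "(\<Sum>r\<in>A. if Q r then (f (\<sigma> r))\<^sup>2 else 0) = (\<Sum>r\<in>A. g r)" .
  have "(\<Sum>r\<in>A. (f r)\<^sup>2) = (\<Sum>r\<in>A. if Q r then (f r)\<^sup>2 else 0) + (\<Sum>r\<in>A. g r)"
    unfolding g_def sum.distrib[symmetric] by (intro sum.cong) auto
  moreover have "(\<Sum>r\<in>A. if Q r then f r * f (\<sigma> r) else 0)
      = (\<Sum>r\<in>A. if Q r then (f r)\<^sup>2 else 0) / 2 + (\<Sum>r\<in>A. if Q r then (f (\<sigma> r))\<^sup>2 else 0) / 2
        - (\<Sum>r\<in>A. if Q r then (f r - f (\<sigma> r))\<^sup>2 else 0) / 2"
    unfolding sum_divide_distrib sum.distrib[symmetric] sum_subtractf[symmetric]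
    by (intro sum.cong) (auto simp: power2_eq_square field_simps)
  ultimately show ?thesis using partner by simp
qed

section \<open>Bond energies\<close>

text \<open>The flag p = True stands for the x-bonds and the component S^x, p = False for the
z-bonds and S^z; a bond leaving r in direction e_i is of type p iff even r_i = p.\<close>

definition spin_comp :: "bool \<Rightarrow> real \<times> real \<Rightarrow> real" where
  "spin_comp p v = (if p then fst v else snd v)"

lemma spin_comp_simps [simp]: "spin_comp True v = fst v" "spin_comp False v = snd v"
  by (simp_all add: spin_comp_def)

definition bond_energy :: "nat \<Rightarrow> bool \<Rightarrow> (nat \<times> nat \<Rightarrow> real \<times> real) \<Rightarrow> real" where
  "bond_energy N p S = (\<Sum>r\<in>torus N.
       (if even (fst r) = p then spin_comp p (S r) * spin_comp p (S (shift1 N r)) else 0)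
     + (if even (snd r) = p then spin_comp p (S r) * spin_comp p (S (shift2 N r)) else 0))"

definition bond_defect :: "nat \<Rightarrow> bool \<Rightarrow> (nat \<times> nat \<Rightarrow> real \<times> real) \<Rightarrow> real" where
  "bond_defect N p S = (\<Sum>r\<in>torus N.
       (if even (fst r) = p then (spin_comp p (S r) - spin_comp p (S (shift1 N r)))\<^sup>2 else 0)
     + (if even (snd r) = p then (spin_comp p (S r) - spin_comp p (S (shift2 N r)))\<^sup>2 else 0))"

lemma hamiltonian_eq_bond_energy:
  "hamiltonian N J1 J2 S = - J1 * bond_energy N True S - J2 * bond_energy N False S"
  unfolding hamiltonian_def bond_energy_def spin_comp_simps by simp

lemma bond_energy_eq:
  assumes "even N"
  shows "bond_energy N p S = (\<Sum>r\<in>torus N. (spin_comp p (S r))\<^sup>2) - bond_defect N p S / 2"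
proof -
  have alt1: "\<forall>r\<in>torus N. (even (fst (shift1 N r)) = p) \<longleftrightarrow> \<not> (even (fst r) = p)"
    using even_fst_shift1[OF assms] by auto
  have alt2: "\<forall>r\<in>torus N. (even (snd (shift2 N r)) = p) \<longleftrightarrow> \<not> (even (snd r) = p)"
    using even_snd_shift2[OF assms] by auto
  show ?thesis
    unfolding bond_energy_def bond_defect_def sum.distrib
      sum_bond_products[OF bij_betw_shift1 alt1, of "\<lambda>r. spin_comp p (S r)"]
      sum_bond_products[OF bij_betw_shift2 alt2, of "\<lambda>r. spin_comp p (S r)"]
    by (simp add: field_simps)
qed

lemma bond_defect_nonneg: "bond_defect N p S \<ge> 0"
  unfolding bond_defect_def by (intro sum_nonneg) auto

lemma bond_defect_const: "bond_defect N p (\<lambda>_. v) = 0"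
  unfolding bond_defect_def by (intro sum.neutral) simp

lemma sum_spin_sq:
  assumes "is_config N S"
  shows "(\<Sum>r\<in>torus N. (fst (S r))\<^sup>2) + (\<Sum>r\<in>torus N. (snd (S r))\<^sup>2) = N * N"
proof -
  have "(\<Sum>r\<in>torus N. (fst (S r))\<^sup>2) + (\<Sum>r\<in>torus N. (snd (S r))\<^sup>2) = (\<Sum>r\<in>torus N. 1)"
    unfolding sum.distrib[symmetric] using assms by (intro sum.cong) (auto simp: is_config_def)
  then show ?thesis by (simp add: card_torus)
qed

lemma hamiltonian_eq_defects:
  assumes "even N"
  shows "hamiltonian N J1 J2 S =
      - J1 * (\<Sum>r\<in>torus N. (fst (S r))\<^sup>2) - J2 * (\<Sum>r\<in>torus N. (snd (S r))\<^sup>2)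
      + J1 * bond_defect N True S / 2 + J2 * bond_defect N False S / 2"
  unfolding hamiltonian_eq_bond_energy bond_energy_eq[OF assms] spin_comp_simps
  by (simp add: algebra_simps)

lemma hamiltonian_const:
  assumes "even N"
  shows "hamiltonian N J1 J2 (\<lambda>_. (1, 0)) = - J1 * (N * N)"
    and "hamiltonian N J1 J2 (\<lambda>_. (0, 1)) = - J2 * (N * N)"
  by (simp_all add: hamiltonian_eq_defects[OF assms] bond_defect_const card_torus)

section \<open>Ground states\<close>

lemma torus_sum_sq_eq_0_iff:
  fixes g :: "nat \<times> nat \<Rightarrow> real"
  shows "(\<Sum>r\<in>torus N. (g r)\<^sup>2) = 0 \<longleftrightarrow> (\<forall>r\<in>torus N. g r = 0)"
  by (simp add: sum_nonneg_eq_0_iff finite_torus)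

lemma ground_state_gaps:
  assumes "even N" and gs: "ground_state N J1 J2 S"
  shows "(J1 - J2) * (\<Sum>r\<in>torus N. (snd (S r))\<^sup>2)
           + J1 * bond_defect N True S / 2 + J2 * bond_defect N False S / 2 \<le> 0"
    and "(J2 - J1) * (\<Sum>r\<in>torus N. (fst (S r))\<^sup>2)
           + J1 * bond_defect N True S / 2 + J2 * bond_defect N False S / 2 \<le> 0"
proof -
  have "is_config N (\<lambda>_. (1, 0))" "is_config N (\<lambda>_. (0, 1))" by (simp_all add: is_config_def)
  then have "hamiltonian N J1 J2 S \<le> - J1 * (N * N)" "hamiltonian N J1 J2 S \<le> - J2 * (N * N)"
    using gs hamiltonian_const[OF \<open>even N\<close>, of J1 J2] unfolding ground_state_def by auto
  moreover have "real (N * N) = (\<Sum>r\<in>torus N. (fst (S r))\<^sup>2) + (\<Sum>r\<in>torus N. (snd (S r))\<^sup>2)"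
    using gs sum_spin_sq unfolding ground_state_def by simp
  ultimately show "(J1 - J2) * (\<Sum>r\<in>torus N. (snd (S r))\<^sup>2)
           + J1 * bond_defect N True S / 2 + J2 * bond_defect N False S / 2 \<le> 0"
    and "(J2 - J1) * (\<Sum>r\<in>torus N. (fst (S r))\<^sup>2)
           + J1 * bond_defect N True S / 2 + J2 * bond_defect N False S / 2 \<le> 0"
    unfolding hamiltonian_eq_defects[OF \<open>even N\<close>] by (simp_all add: algebra_simps)
qed

lemma ground_state_defects_and_minority:
  assumes "even N" and J: "J1 > 0" "J2 > 0" and gs: "ground_state N J1 J2 S"
  shows "bond_defect N True S = 0" and "bond_defect N False S = 0"
    and "J1 > J2 \<Longrightarrow> \<forall>r\<in>torus N. snd (S r) = 0"
    and "J2 > J1 \<Longrightarrow> \<forall>r\<in>torus N. fst (S r) = 0"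
proof -
  define X where "X = (\<Sum>r\<in>torus N. (fst (S r))\<^sup>2)"
  define Z where "Z = (\<Sum>r\<in>torus N. (snd (S r))\<^sup>2)"
  define DX DZ where "DX = bond_defect N True S" and "DZ = bond_defect N False S"
  note gap = ground_state_gaps[OF \<open>even N\<close> gs, folded X_def Z_def DX_def DZ_def]
  have nonneg: "X \<ge> 0" "Z \<ge> 0" "DX \<ge> 0" "DZ \<ge> 0"
    unfolding X_def Z_def DX_def DZ_def by (auto intro: sum_nonneg bond_defect_nonneg)
  have "J1 * DX \<ge> 0" "J2 * DZ \<ge> 0" using J nonneg by simp_all
  moreover have "J1 * DX + J2 * DZ \<le> 0"
  proof (cases "J2 \<le> J1")
    case True
    then have "(J1 - J2) * Z \<ge> 0" using nonneg by simp
    then show ?thesis using gap(1) by linarith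
  next
    case False
    then have "(J2 - J1) * X \<ge> 0" using nonneg by simp
    then show ?thesis using gap(2) by linarith
  qed
  ultimately have "J1 * DX = 0" "J2 * DZ = 0" by linarith+
  then have "DX = 0" "DZ = 0" using J by simp_all
  then show "bond_defect N True S = 0" "bond_defect N False S = 0" by (simp_all add: DX_def DZ_def)
  show "\<forall>r\<in>torus N. snd (S r) = 0" if "J1 > J2"
  proof -
    have "(J1 - J2) * Z \<le> 0" using gap(1) \<open>DX = 0\<close> \<open>DZ = 0\<close> by simp
    then have "Z = 0" using that nonneg by (simp add: mult_le_0_iff)
    then show ?thesis unfolding Z_def torus_sum_sq_eq_0_iff .
  qed
  show "\<forall>r\<in>torus N. fst (S r) = 0" if "J2 > J1"
  proof -
    have "(J2 - J1) * X \<le> 0" using gap(2) \<open>DX = 0\<close> \<open>DZ = 0\<close> by simp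
    then have "X = 0" using that nonneg by (simp add: mult_le_0_iff)
    then show ?thesis unfolding X_def torus_sum_sq_eq_0_iff .
  qed
qed

section \<open>Plaquette flips\<close>

definition aligned :: "nat \<Rightarrow> (nat \<times> nat \<Rightarrow> real \<times> real) \<Rightarrow> bool" where
  "aligned N S \<longleftrightarrow> (\<forall>r\<in>torus N.
       spin_comp (even (fst r)) (S r) = spin_comp (even (fst r)) (S (shift1 N r))
     \<and> spin_comp (even (snd r)) (S r) = spin_comp (even (snd r)) (S (shift2 N r)))"

lemma aligned_if_no_bond_defect:
  assumes "bond_defect N True S = 0" and "bond_defect N False S = 0"
  shows "aligned N S"
proof -
  have bonds: "\<forall>r\<in>torus N.
        (even (fst r) = p \<longrightarrow> spin_comp p (S r) = spin_comp p (S (shift1 N r)))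
      \<and> (even (snd r) = p \<longrightarrow> spin_comp p (S r) = spin_comp p (S (shift2 N r)))"
    if "bond_defect N p S = 0" for p
    using that unfolding bond_defect_def
    by (subst (asm) sum_nonneg_eq_0_iff) (auto simp: finite_torus add_nonneg_eq_0_iff)
  show ?thesis
    unfolding aligned_def using bonds[OF assms(1)] bonds[OF assms(2)] by (metis (full_types))
qed

lemma spin_sq_eq_if_comp_eq:
  assumes "(fst v)\<^sup>2 + (snd v)\<^sup>2 = 1" and "(fst w)\<^sup>2 + (snd w)\<^sup>2 = 1"
    and "spin_comp q v = spin_comp q w"
  shows "(spin_comp p v)\<^sup>2 = (spin_comp p w)\<^sup>2"
  using assms by (cases p; cases q) (auto simp: spin_comp_def)

lemma aligned_abs_spin_comp_const:
  assumes "is_config N S" and "aligned N S" and "s \<in> torus N"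
  shows "\<bar>spin_comp p (S s)\<bar> = \<bar>spin_comp p (S (0, 0))\<bar>"
proof -
  have unit: "(fst (S r))\<^sup>2 + (snd (S r))\<^sup>2 = 1" if "r \<in> torus N" for r
    using assms(1) that by (simp add: is_config_def)
  have "(spin_comp p (S s))\<^sup>2 = (spin_comp p (S (0, 0)))\<^sup>2"
  proof (rule torus_shift_invariant_const[OF _ _ assms(3)])
    show "\<forall>r\<in>torus N. (spin_comp p (S (shift1 N r)))\<^sup>2 = (spin_comp p (S r))\<^sup>2"
      using assms(2) unit shift1_in_torus spin_sq_eq_if_comp_eq unfolding aligned_def by metis
    show "\<forall>r\<in>torus N. (spin_comp p (S (shift2 N r)))\<^sup>2 = (spin_comp p (S r))\<^sup>2"
      using assms(2) unit shift2_in_torus spin_sq_eq_if_comp_eq unfolding aligned_def by metis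
  qed
  then show ?thesis by (metis real_sqrt_abs)
qed

lemma plaq_corner_iff: "plaq_corner N r \<longleftrightarrow> r \<in> torus N \<and> even (fst r) = even (snd r)"
  by (auto simp: plaq_corner_def)

lemma mem_plaquette_iff:
  "s \<in> plaquette N r \<longleftrightarrow>
     (fst s = fst r \<or> fst s = Suc (fst r) mod N) \<and> (snd s = snd r \<or> snd s = Suc (snd r) mod N)"
  by (cases s; cases r) (auto simp: plaquette_def shift1_def shift2_def)

text \<open>The lower coordinate of the parity-p plaquette covering coordinate k, wrapping around at 0.\<close>

definition corner_coord :: "nat \<Rightarrow> bool \<Rightarrow> nat \<Rightarrow> nat" where
  "corner_coord N p k = (if even k = p then k else if k = 0 then N - 1 else k - 1)"

definition corner_of :: "nat \<Rightarrow> bool \<Rightarrow> nat \<times> nat \<Rightarrow> nat \<times> nat" where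
  "corner_of N p s = (corner_coord N p (fst s), corner_coord N p (snd s))"

lemma corner_coord_iff:
  assumes "even N" "a < N" "k < N" "even a = p"
  shows "(k = a \<or> k = Suc a mod N) \<longleftrightarrow> a = corner_coord N p k"
  using assms by (auto simp: corner_coord_def mod_Suc)

lemma corner_coord_bounds:
  assumes "even N" "k < N"
  shows "corner_coord N p k < N" and "even (corner_coord N p k) = p"
  using assms by (auto simp: corner_coord_def)

lemma corner_of_in_torus:
  assumes "even N" "s \<in> torus N"
  shows "corner_of N p s \<in> torus N" and "even (fst (corner_of N p s)) = p"
    and "even (snd (corner_of N p s)) = p"
  using assms corner_coord_bounds by (auto simp: corner_of_def torus_def)

lemma mem_plaquette_iff_corner:
  assumes "even N" "s \<in> torus N" "r \<in> torus N" "even (fst r) = p" "even (snd r) = p"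
  shows "s \<in> plaquette N r \<longleftrightarrow> r = corner_of N p s"
  using assms corner_coord_iff[OF \<open>even N\<close>, of "fst r" "fst s" p]
    corner_coord_iff[OF \<open>even N\<close>, of "snd r" "snd s" p]
  unfolding mem_plaquette_iff corner_of_def prod_eq_iff by (simp add: torus_def mem_Times_iff)

lemma aligned_plaquette_const:
  assumes "aligned N S" "r \<in> torus N" "even (fst r) = p" "even (snd r) = p"
    and "s \<in> plaquette N r"
  shows "spin_comp p (S s) = spin_comp p (S r)"
proof -
  have r: "spin_comp p (S (shift1 N r)) = spin_comp p (S r)"
    "spin_comp p (S (shift2 N r)) = spin_comp p (S r)"
    using assms(1-4) unfolding aligned_def by auto
  have "shift1 N r \<in> torus N" using assms(2) by (rule shift1_in_torus)
  then have "spin_comp (even (snd (shift1 N r))) (S (shift2 N (shift1 N r)))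
      = spin_comp (even (snd (shift1 N r))) (S (shift1 N r))"
    using assms(1) unfolding aligned_def by simp
  moreover have "even (snd (shift1 N r)) = p" using assms(4) by (simp add: shift1_def)
  ultimately show ?thesis
    using assms(5) r unfolding plaquette_def by auto
qed

lemma spin_comp_phi:
  "spin_comp p (phi N r S s) =
     (if even (fst r) = p \<and> s \<in> plaquette N r then - spin_comp p (S s) else spin_comp p (S s))"
  by (auto simp: phi_def spin_comp_def)

lemma spin_comp_fold_phi:
  "spin_comp p (fold (phi N) rs S s) =
     spin_comp p (S s) * (-1) ^ length (filter (\<lambda>r. even (fst r) = p \<and> s \<in> plaquette N r) rs)"
  by (induction rs arbitrary: S) (auto simp: spin_comp_phi)

lemma aligned_obtainable:
  assumes "even N" and config: "is_config N S" and aligned: "aligned N S"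
  shows "obtainable_from N (\<bar>fst (S (0, 0))\<bar>, \<bar>snd (S (0, 0))\<bar>) S"
proof -
  define C where "C = {r. plaq_corner N r \<and> spin_comp (even (fst r)) (S r) < 0}"
  have "finite C"
    by (rule finite_subset[OF _ finite_torus]) (auto simp: C_def plaq_corner_def)
  then obtain rs where rs: "set rs = C" "distinct rs" using finite_distinct_list by blast
  have flipped: "{r. even (fst r) = p \<and> s \<in> plaquette N r} \<inter> C
      = (if spin_comp p (S s) < 0 then {corner_of N p s} else {})"
    if s: "s \<in> torus N" for s p
  proof -
    have "r \<in> C \<and> even (fst r) = p \<and> s \<in> plaquette N r
        \<longleftrightarrow> r = corner_of N p s \<and> spin_comp p (S s) < 0" for r
    proof
      assume r: "r \<in> C \<and> even (fst r) = p \<and> s \<in> plaquette N r"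
      then have torus: "r \<in> torus N" and parity: "even (fst r) = p" "even (snd r) = p"
        and negative: "spin_comp p (S r) < 0" by (auto simp: C_def plaq_corner_iff)
      have "r = corner_of N p s"
        using r mem_plaquette_iff_corner[OF \<open>even N\<close> s torus parity] by simp
      moreover have "spin_comp p (S s) = spin_comp p (S r)"
        using r aligned_plaquette_const[OF aligned torus parity] by simp
      ultimately show "r = corner_of N p s \<and> spin_comp p (S s) < 0" using negative by simp
    next
      assume r: "r = corner_of N p s \<and> spin_comp p (S s) < 0"
      then have torus: "r \<in> torus N" and parity: "even (fst r) = p" "even (snd r) = p"
        using corner_of_in_torus[OF \<open>even N\<close> s] by auto
      then have "s \<in> plaquette N r" using r mem_plaquette_iff_corner[OF \<open>even N\<close> s] by simp
      moreover have "spin_comp p (S r) < 0"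
        using aligned_plaquette_const[OF aligned torus parity calculation] conjunct2[OF r] by linarith
      ultimately show "r \<in> C \<and> even (fst r) = p \<and> s \<in> plaquette N r"
        using torus parity by (simp add: C_def plaq_corner_iff)
    qed
    then show ?thesis by auto
  qed
  show ?thesis unfolding obtainable_from_def
  proof (intro exI conjI ballI)
    show "distinct rs" by (rule rs(2))
    show "plaq_corner N r" if "r \<in> set rs" for r using that rs(1) by (simp add: C_def)
    fix s assume s: "s \<in> torus N"
    have "spin_comp p (fold (phi N) rs (\<lambda>_. (\<bar>fst (S (0, 0))\<bar>, \<bar>snd (S (0, 0))\<bar>)) s)
        = spin_comp p (S s)" for p
    proof -
      have "\<bar>spin_comp p (S (0, 0))\<bar> = \<bar>spin_comp p (S s)\<bar>"
        using aligned_abs_spin_comp_const[OF config aligned s] by simp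
      then show ?thesis
        unfolding spin_comp_fold_phi distinct_length_filter[OF rs(2)] rs(1) flipped[OF s]
        by (cases p) (auto simp: spin_comp_def)
    qed
    from this[of True] this[of False] show "fold (phi N) rs (\<lambda>_. (\<bar>fst (S (0, 0))\<bar>, \<bar>snd (S (0, 0))\<bar>)) s = S s"
      by (simp add: prod_eq_iff)
  qed
qed

theorem theorem2p1:
  fixes N :: nat and J1 J2 :: real
  assumes "even N" and "N > 0" and "J1 > 0" and "J2 > 0"
  shows "(J1 = J2 \<longrightarrow> (\<forall>S. ground_state N J1 J2 S \<longrightarrow>
            (\<exists>e. (fst e)\<^sup>2 + (snd e)\<^sup>2 = 1 \<and> obtainable_from N e S)))
       \<and> (J1 > J2 \<longrightarrow> (\<forall>S. ground_state N J1 J2 S \<longrightarrow> obtainable_from N (1, 0) S))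
       \<and> (J2 > J1 \<longrightarrow> (\<forall>S. ground_state N J1 J2 S \<longrightarrow> obtainable_from N (0, 1) S))"
proof (intro conjI impI allI)
  fix S assume gs: "ground_state N J1 J2 S"
  note minority = ground_state_defects_and_minority[OF assms(1,3,4) gs]
  have config: "is_config N S" using gs by (simp add: ground_state_def)
  define e where "e = (\<bar>fst (S (0, 0))\<bar>, \<bar>snd (S (0, 0))\<bar>)"
  have origin: "(0, 0) \<in> torus N" using assms(2) by (simp add: torus_def)
  then have unit: "(fst e)\<^sup>2 + (snd e)\<^sup>2 = 1" using config by (simp add: e_def is_config_def)
  have obtainable: "obtainable_from N e S"
    unfolding e_def using config aligned_if_no_bond_defect[OF minority(1,2)]
    by (rule aligned_obtainable[OF assms(1)])
  then show "\<exists>e. (fst e)\<^sup>2 + (snd e)\<^sup>2 = 1 \<and> obtainable_from N e S" using unit by blast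
  show "obtainable_from N (1, 0) S" if "J1 > J2"
  proof -
    have "snd e = 0" using minority(3)[OF that] origin by (simp add: e_def)
    then have "e = (1, 0)" using unit by (simp add: e_def prod_eq_iff abs_square_eq_1)
    then show ?thesis using obtainable by simp
  qed
  show "obtainable_from N (0, 1) S" if "J2 > J1"
  proof -
    have "fst e = 0" using minority(4)[OF that] origin by (simp add: e_def)
    then have "e = (0, 1)" using unit by (simp add: e_def prod_eq_iff abs_square_eq_1)
    then show ?thesis using obtainable by simp
  qed
qed

end
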